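(* Let $p\in\mathbb{R}^3$ and suppose that the Hugoniot curve $\mathcal{H}(p)$ meets the characteristic plane $\mathcal{C}$ in two distinct points $q_0$ and $q_1$. Then one of these points lies in $\mathcal{C}_s$ and the other lies in $\mathcal{C}_f$. Moreover, the value of $\sigma$ at the point lying in $\mathcal{C}_s$ is strictly smaller than the value of $\sigma$ at the point lying in $\mathcal{C}_f$.
   Context: Fix real constants $a_1,a_2,a_3,a_4$ and $b_1>1$, and put $c=a_3-a_2$, assumed $>0$. The model is the system $W_t+F(W)_x=0$, $W=(u,v)$, with flux $F=(f,g)$, $f(u,v)=(b_1+1)u^2/2+v^2/2+a_1u+a_2v$, $g(u,v)=uv+a_3u+a_4v$. We work in coordinates $(z,\tau,Y)\in\mathbb{R}^3$ (a chart of the wave manifold). Define $\widetilde U(z,\tau)=\frac{2cz}{z^2+1}+c\tau(z^2-1)$, $V_1(z,\tau)=\frac{c}{z^2+1}+c\tau z$, $U=(\widetilde U-a_1+a_4)/b_1$, $V=V_1-a_3$. The point $(z,\tau,Y)$ represents the shock with left state $W(z,\tau,Y)=(U+zY/2,\;V+Y/2)$ and right state $W'(z,\tau,Y)=(U-zY/2,\;V-Y/2)$, with shock speed $\sigma(z,\tau,Y)=\frac{c}{b_1}[(b_1+1)z^2-1]\tau+\frac{c}{b_1}\frac{(b_1+2)z}{z^2+1}+\sigma_0$, where $\sigma_0=[(b_1+1)a_4-a_1]/b_1$. For $p\in\mathbb{R}^3$, the Hugoniot curve is $\mathcal{H}(p)=\{q\in\mathbb{R}^3: W(q)=W(p)\}$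 and the Hugoniot$'$ curve is $\mathcal{H}'(p)=\{q: W'(q)=W'(p)\}$ (each is the graph of a function of $z\in\mathbb{R}$). The characteristic plane is $\mathcal{C}=\{Y=0\}$, with $\mathcal{C}_s=\{Y=0,\tau<0\}$ and $\mathcal{C}_f=\{Y=0,\tau>0\}$. *)

theory Defs
  imports Complex_Main
begin

text \<open>Points of the chart are triples (z, tau, Y) :: real \<times> real \<times> real.
  The model constants a1 a2 a3 a4 b1 are passed explicitly; c = a3 - a2.\<close>

definition Utilde :: "real \<Rightarrow> real \<Rightarrow> real \<Rightarrow> real \<Rightarrow> real" where
  "Utilde a2 a3 z \<tau> = 2 * (a3 - a2) * z / (z^2 + 1) + (a3 - a2) * \<tau> * (z^2 - 1)"

definition V1 :: "real \<Rightarrow> real \<Rightarrow> real \<Rightarrow> real \<Rightarrow> real" where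
  "V1 a2 a3 z \<tau> = (a3 - a2) / (z^2 + 1) + (a3 - a2) * \<tau> * z"

definition Ufun :: "real \<Rightarrow> real \<Rightarrow> real \<Rightarrow> real \<Rightarrow> real \<Rightarrow> real \<Rightarrow> real \<Rightarrow> real" where
  "Ufun a1 a2 a3 a4 b1 z \<tau> = (Utilde a2 a3 z \<tau> - a1 + a4) / b1"

definition Vfun :: "real \<Rightarrow> real \<Rightarrow> real \<Rightarrow> real \<Rightarrow> real" where
  "Vfun a2 a3 z \<tau> = V1 a2 a3 z \<tau> - a3"

definition Wl :: "real \<Rightarrow> real \<Rightarrow> real \<Rightarrow> real \<Rightarrow> real \<Rightarrow> real \<times> real \<times> real \<Rightarrow> real \<times> real" where
  "Wl a1 a2 a3 a4 b1 p = (case p of (z, \<tau>, Y) \<Rightarrow>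
     (Ufun a1 a2 a3 a4 b1 z \<tau> + z * Y / 2, Vfun a2 a3 z \<tau> + Y / 2))"

definition Wr :: "real \<Rightarrow> real \<Rightarrow> real \<Rightarrow> real \<Rightarrow> real \<Rightarrow> real \<times> real \<times> real \<Rightarrow> real \<times> real" where
  "Wr a1 a2 a3 a4 b1 p = (case p of (z, \<tau>, Y) \<Rightarrow>
     (Ufun a1 a2 a3 a4 b1 z \<tau> - z * Y / 2, Vfun a2 a3 z \<tau> - Y / 2))"

definition shock_speed :: "real \<Rightarrow> real \<Rightarrow> real \<Rightarrow> real \<Rightarrow> real \<Rightarrow> real \<times> real \<times> real \<Rightarrow> real" where
  "shock_speed a1 a2 a3 a4 b1 p = (case p of (z, \<tau>, Y) \<Rightarrow>
     (a3 - a2) / b1 * ((b1 + 1) * z^2 - 1) * \<tau>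
     + (a3 - a2) / b1 * ((b1 + 2) * z / (z^2 + 1))
     + ((b1 + 1) * a4 - a1) / b1)"

definition hugoniot :: "real \<Rightarrow> real \<Rightarrow> real \<Rightarrow> real \<Rightarrow> real \<Rightarrow> real \<times> real \<times> real \<Rightarrow> (real \<times> real \<times> real) set" where
  "hugoniot a1 a2 a3 a4 b1 p = {q. Wl a1 a2 a3 a4 b1 q = Wl a1 a2 a3 a4 b1 p}"

definition char_plane :: "(real \<times> real \<times> real) set" where
  "char_plane = {(z, \<tau>, Y). Y = 0}"

definition char_plane_s :: "(real \<times> real \<times> real) set" where
  "char_plane_s = {(z, \<tau>, Y). Y = 0 \<and> \<tau> < 0}"

definition char_plane_f :: "(real \<times> real \<times> real) set" where
  "char_plane_f = {(z, \<tau>, Y). Y = 0 \<and> \<tau> > 0}"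

end

theory Submission
  imports Defs
begin

text \<open>On the characteristic plane the left state is determined by the pair
  \<open>\<alpha> = Utilde/c\<close>, \<open>\<beta> = V1/c\<close>, and eliminating \<open>\<tau>\<close> shows that every characteristic point
  with given \<open>(\<alpha>, \<beta>)\<close> has its \<open>z\<close> among the roots of \<open>\<beta> z\<^sup>2 - \<alpha> z + 1 - \<beta>\<close>, with \<open>\<tau>\<close> then
  determined by \<open>z\<close>. Hence two distinct such points have distinct roots \<open>z\<^sub>0, z\<^sub>1\<close>, and Vieta's
  relations give \<open>\<tau>\<^sub>i (1 + z\<^sub>i\<^sup>2) = \<beta> (z\<^sub>i - z\<^sub>j)\<close>: the two values of \<open>\<tau>\<close> have opposite signs.
  The same relations collapse the speed to \<open>\<sigma>(q\<^sub>1) - \<sigma>(q\<^sub>0) = c \<tau>\<^sub>1 (1 + z\<^sub>1\<^sup>2)\<close>, so the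
  point with \<open>\<tau> > 0\<close> is the faster one.\<close>

definition char_alpha :: "real \<Rightarrow> real \<Rightarrow> real" where
  "char_alpha z \<tau> = 2 * z / (z^2 + 1) + \<tau> * (z^2 - 1)"

definition char_beta :: "real \<Rightarrow> real \<Rightarrow> real" where
  "char_beta z \<tau> = 1 / (z^2 + 1) + \<tau> * z"

lemma Utilde_eq_char_alpha: "Utilde a2 a3 z \<tau> = (a3 - a2) * char_alpha z \<tau>"
  by (simp add: Utilde_def char_alpha_def algebra_simps)

lemma V1_eq_char_beta: "V1 a2 a3 z \<tau> = (a3 - a2) * char_beta z \<tau>"
  by (simp add: V1_def char_beta_def algebra_simps)

lemma Wl_char_plane_eq_iff:
  assumes "b1 \<noteq> 0" and "a3 \<noteq> a2"
  shows "Wl a1 a2 a3 a4 b1 (z0, \<tau>0, 0) = Wl a1 a2 a3 a4 b1 (z1, \<tau>1, 0) \<longleftrightarrow>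
         char_alpha z0 \<tau>0 = char_alpha z1 \<tau>1 \<and> char_beta z0 \<tau>0 = char_beta z1 \<tau>1"
  using assms
  by (simp add: Wl_def Ufun_def Vfun_def Utilde_eq_char_alpha V1_eq_char_beta divide_cancel_right)

lemma tau_eq_char_alpha_beta: "\<tau> * (1 + z^2) = 2 * char_beta z \<tau> * z - char_alpha z \<tau>"
  by (simp add: char_alpha_def char_beta_def algebra_simps power2_eq_square)

lemma char_alpha_beta_quadratic:
  "char_beta z \<tau> * z^2 - char_alpha z \<tau> * z + 1 - char_beta z \<tau> = 0"
proof -
  have "z^2 + 1 \<noteq> 0" by (smt (verit) zero_le_power2)
  then have "1 / (z^2 + 1) + z^2 / (z^2 + 1) = 1"
    by (simp add: add_divide_distrib[symmetric] add.commute)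
  then show ?thesis
    by (simp add: char_alpha_def char_beta_def algebra_simps power2_eq_square
        add_divide_distrib diff_divide_distrib)
qed

lemma same_char_alpha_beta_z_neq:
  assumes "char_alpha z0 \<tau>0 = char_alpha z1 \<tau>1" and "char_beta z0 \<tau>0 = char_beta z1 \<tau>1"
    and "(z0, \<tau>0) \<noteq> (z1, \<tau>1)"
  shows "z0 \<noteq> z1"
proof
  assume "z0 = z1"
  then have "\<tau>0 * (1 + z0^2) = \<tau>1 * (1 + z0^2)"
    using assms(1,2) tau_eq_char_alpha_beta[of \<tau>0 z0] tau_eq_char_alpha_beta[of \<tau>1 z1] by simp
  moreover have "1 + z0^2 \<noteq> 0" by (smt (verit) zero_le_power2)
  ultimately show False using assms(3) \<open>z0 = z1\<close> by simp
qed

lemma quadratic_vieta: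
  fixes \<alpha> \<beta> z0 z1 :: real
  assumes "\<beta> * z0^2 - \<alpha> * z0 + 1 - \<beta> = 0" and "\<beta> * z1^2 - \<alpha> * z1 + 1 - \<beta> = 0"
    and "z0 \<noteq> z1"
  shows "\<alpha> = \<beta> * (z0 + z1)" and "\<beta> * (1 + z0 * z1) = 1"
proof -
  have "(z0 - z1) * (\<beta> * (z0 + z1) - \<alpha>) = 0"
    using assms(1,2) by (simp add: algebra_simps power2_eq_square)
  then show \<alpha>: "\<alpha> = \<beta> * (z0 + z1)" using assms(3) by simp
  show "\<beta> * (1 + z0 * z1) = 1"
    using assms(1) unfolding \<alpha> by (simp add: algebra_simps power2_eq_square)
qed

lemma shock_speed_char_plane:
  assumes "\<beta> * (1 + z0 * z1) = 1" and "\<tau>0 * (1 + z0^2) = \<beta> * (z0 - z1)"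
  shows "shock_speed a1 a2 a3 a4 b1 (z0, \<tau>0, 0)
           = (a3 - a2) / b1 * (\<beta> * ((b1 + 1) * z0 + z1)) + ((b1 + 1) * a4 - a1) / b1"
proof -
  have denom_nonzero: "z0^2 + 1 \<noteq> 0" by (smt (verit) zero_le_power2)
  have "(((b1 + 1) * z0^2 - 1) * \<tau>0 + (b1 + 2) * z0 / (z0^2 + 1)) * (z0^2 + 1)
      = ((b1 + 1) * z0^2 - 1) * (\<tau>0 * (1 + z0^2)) + (b1 + 2) * z0"
    using denom_nonzero by (simp add: field_simps)
  also have "\<dots> = ((b1 + 1) * z0^2 - 1) * (\<beta> * (z0 - z1)) + (b1 + 2) * z0 * (\<beta> * (1 + z0 * z1))"
    using assms by simp
  also have "\<dots> = \<beta> * ((b1 + 1) * z0 + z1) * (z0^2 + 1)"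
    by (simp add: algebra_simps power2_eq_square)
  finally have "((b1 + 1) * z0^2 - 1) * \<tau>0 + (b1 + 2) * z0 / (z0^2 + 1) = \<beta> * ((b1 + 1) * z0 + z1)"
    using denom_nonzero by simp
  moreover have "shock_speed a1 a2 a3 a4 b1 (z0, \<tau>0, 0) = (a3 - a2) / b1 *
      (((b1 + 1) * z0^2 - 1) * \<tau>0 + (b1 + 2) * z0 / (z0^2 + 1)) + ((b1 + 1) * a4 - a1) / b1"
    by (simp add: shock_speed_def distrib_left mult.assoc)
  ultimately show ?thesis by simp
qed

lemma char_pair_tau_and_speed:
  assumes "b1 \<noteq> 0" and "a3 \<noteq> a2"
    and "Wl a1 a2 a3 a4 b1 (z0, \<tau>0, 0) = Wl a1 a2 a3 a4 b1 (z1, \<tau>1, 0)"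
    and "(z0, \<tau>0) \<noteq> (z1, \<tau>1)"
  shows "\<tau>0 * (1 + z0^2) = - (\<tau>1 * (1 + z1^2))" and "\<tau>1 \<noteq> 0"
    and "shock_speed a1 a2 a3 a4 b1 (z1, \<tau>1, 0) - shock_speed a1 a2 a3 a4 b1 (z0, \<tau>0, 0)
           = (a3 - a2) * (\<tau>1 * (1 + z1^2))"
proof -
  define \<alpha> \<beta> where "\<alpha> = char_alpha z0 \<tau>0" and "\<beta> = char_beta z0 \<tau>0"
  have same: "char_alpha z1 \<tau>1 = \<alpha>" "char_beta z1 \<tau>1 = \<beta>"
    using assms(3) Wl_char_plane_eq_iff[OF assms(1,2)] by (simp_all add: \<alpha>_def \<beta>_def)
  have zne: "z0 \<noteq> z1"
    using same_char_alpha_beta_z_neq[of z0 \<tau>0 z1 \<tau>1] assms(4) same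
    by (metis \<alpha>_def \<beta>_def)
  note vieta = quadratic_vieta[OF
      char_alpha_beta_quadratic[of z0 \<tau>0, folded \<alpha>_def \<beta>_def]
      char_alpha_beta_quadratic[of z1 \<tau>1, unfolded same] zne]
  have \<tau>0: "\<tau>0 * (1 + z0^2) = \<beta> * (z0 - z1)"
    using tau_eq_char_alpha_beta[of \<tau>0 z0] vieta(1) by (simp add: \<alpha>_def \<beta>_def algebra_simps)
  have \<tau>1: "\<tau>1 * (1 + z1^2) = \<beta> * (z1 - z0)"
    using tau_eq_char_alpha_beta[of \<tau>1 z1] vieta(1) by (simp add: same algebra_simps)
  show "\<tau>0 * (1 + z0^2) = - (\<tau>1 * (1 + z1^2))"
    unfolding \<tau>0 \<tau>1 by (simp add: algebra_simps)
  have "\<beta> \<noteq> 0" using vieta(2) by auto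
  then show "\<tau>1 \<noteq> 0" using \<tau>1 zne by auto
  have "\<beta> * (1 + z1 * z0) = 1" using vieta(2) by (simp add: mult.commute)
  then show "shock_speed a1 a2 a3 a4 b1 (z1, \<tau>1, 0) - shock_speed a1 a2 a3 a4 b1 (z0, \<tau>0, 0)
           = (a3 - a2) * (\<tau>1 * (1 + z1^2))"
    using assms(1) unfolding \<tau>1
    by (simp add: shock_speed_char_plane[OF vieta(2) \<tau>0] shock_speed_char_plane[of \<beta> z1 z0 \<tau>1]
        \<tau>1 field_simps)
qed

theorem proposition1:
  fixes a1 a2 a3 a4 b1 :: real and p q0 q1 :: "real \<times> real \<times> real"
  assumes "b1 > 1" and "a3 - a2 > 0"
    and "hugoniot a1 a2 a3 a4 b1 p \<inter> char_plane = {q0, q1}"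
    and "q0 \<noteq> q1"
  shows "(q0 \<in> char_plane_s \<and> q1 \<in> char_plane_f \<and>
            shock_speed a1 a2 a3 a4 b1 q0 < shock_speed a1 a2 a3 a4 b1 q1)
       \<or> (q1 \<in> char_plane_s \<and> q0 \<in> char_plane_f \<and>
            shock_speed a1 a2 a3 a4 b1 q1 < shock_speed a1 a2 a3 a4 b1 q0)"
proof -
  have "q0 \<in> char_plane" "q1 \<in> char_plane" using assms(3) by auto
  then obtain z0 \<tau>0 z1 \<tau>1 where q0: "q0 = (z0, \<tau>0, 0)" and q1: "q1 = (z1, \<tau>1, 0)"
    by (cases q0; cases q1) (auto simp: char_plane_def)
  have "q0 \<in> hugoniot a1 a2 a3 a4 b1 p" "q1 \<in> hugoniot a1 a2 a3 a4 b1 p" using assms(3) by auto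
  then have same_state: "Wl a1 a2 a3 a4 b1 (z0, \<tau>0, 0) = Wl a1 a2 a3 a4 b1 (z1, \<tau>1, 0)"
    by (simp add: hugoniot_def q0 q1)
  have distinct: "(z0, \<tau>0) \<noteq> (z1, \<tau>1)" using assms(4) q0 q1 by simp
  have "b1 \<noteq> 0" "a3 \<noteq> a2" using assms(1,2) by simp_all
  note pair = char_pair_tau_and_speed[OF this same_state distinct]
  have w0: "1 + z0^2 > 0" and w1: "1 + z1^2 > 0" by (smt (verit) zero_le_power2)+
  consider "\<tau>1 > 0" | "\<tau>1 < 0" using pair(2) by linarith
  then show ?thesis
  proof cases
    case 1
    then have "\<tau>0 * (1 + z0^2) < 0" using pair(1) w1 by simp
    then have "\<tau>0 < 0" using w0 by (simp add: mult_less_0_iff)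
    moreover have "(a3 - a2) * (\<tau>1 * (1 + z1^2)) > 0" using 1 w1 assms(2) by simp
    ultimately show ?thesis
      using 1 pair(3) by (simp add: q0 q1 char_plane_s_def char_plane_f_def)
  next
    case 2
    then have "\<tau>0 * (1 + z0^2) > 0" using pair(1) w1 by (simp add: mult_neg_pos)
    then have "\<tau>0 > 0" using w0 by (simp add: zero_less_mult_iff)
    moreover have "(a3 - a2) * (\<tau>1 * (1 + z1^2)) < 0"
      using 2 w1 assms(2) by (simp add: mult_pos_neg mult_neg_pos)
    ultimately show ?thesis
      using 2 pair(3) by (simp add: q0 q1 char_plane_s_def char_plane_f_def)
  qed
qed

end
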